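(* Let $N\ge1$, $r_i>0$ for $i=1,\dots,N$, and $S_u=\bigsqcup_{i=1}^N\{i\}\times[0,r_i]$; write $f\in C(S_u)$ as $f=\sum_i f_i$ with $f_i\in C[0,r_i]$. Let $p_i,q_i\in[0,1]$, $c_i,d_i>0$, and let $\mathfrak p_{i,1},\mathfrak p_{i,2}$, $i=1,\dots,N$, be Borel sub-probability measures on $S_u$. Let $A$ be the operator $Af=\tfrac12 f''$ (i.e. $(Af)_i=\tfrac12 f_i''$) with domain consisting of those $f$ with each $f_i\in C^2[0,r_i]$ and $$p_if_i''(0)-(1-p_i)f_i'(0)+c_if_i(0)=c_i\int f\,\mathrm d\mathfrak p_{i,1},\qquad q_if_i''(r_i)+(1-q_i)f_i'(r_i)+d_if_i(r_i)=d_i\int f\,\mathrm d\mathfrak p_{i,2}$$ for all $i$. For each $i$ let $A_i$ be the operator $A_if=\tfrac12 f''$ on $C[0,r_i]$ with domain the $f\in C^2[0,r_i]$ with $p_if''(0)-(1-p_i)f'(0)+c_if(0)=0$ and $q_if''(r_i)+(1-q_i)f'(r_i)+d_if(r_i)=0$; it generates a Feller semigroup with resolvent $R_{\lambda,i}$. For $\lambda>0$, with $s=\sqrt{2\lambda}$, let $$a^i_{1,1}=2\lambda p_i-s(1-p_i)+c_i,\quad a^i_{1,2}=2\lambda p_i+s(1-p_i)+c_i,$$ $$a^i_{2,1}=e^{sr_i}(2\lambda q_i+s(1-q_i)+d_i),\quad a^i_{2,2}=e^{-sr_i}(2\lambda q_i-s(1-q_i)+d_i),$$ $W_i=a^i_{1,1}a^i_{2,2}-a^i_{1,2}a^i_{2,1}$,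 and for $x\in[0,r_i]$ $$\ell^{i,1}_\lambda(x)=\tfrac{c_i}{W_i}\big(a^i_{2,2}e^{sx}-a^i_{2,1}e^{-sx}\big),\qquad \ell^{i,2}_\lambda(x)=\tfrac{d_i}{W_i}\big(a^i_{1,1}e^{-sx}-a^i_{1,2}e^{sx}\big)$$ (extended by $0$ outside the $i$th interval). For $g\in C(S_u)$ set $R^{du}_\lambda g=\sum_iR_{\lambda,i}g_i$, let $(u_{i,j})_{i\le N,j\in\{1,2\}}$ be the unique solution of $$u_{i,j}=\int R^{du}_\lambda g\,\mathrm d\mathfrak p_{i,j}+\sum_{k=1}^N\sum_{l=1}^2u_{k,l}\int\ell^{k,l}_\lambda\,\mathrm d\mathfrak p_{i,j},$$ and $R^{co}_\lambda g=R^{du}_\lambda g+\sum_{i=1}^N\sum_{j=1}^2u_{i,j}\ell^{i,j}_\lambda$. Then for every $\lambda>0$ and $g\in C(S_u)$ there is a unique $f$ in the domain of $A$ with $\lambda f-Af=g$, and this $f$ equals $R^{co}_\lambda g$.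
   Context: $C[0,r]$ denotes real continuous functions on $[0,r]$, $C^2[0,r]$ twice continuously differentiable functions (one-sided derivatives at endpoints). A Feller semigroup is a strongly continuous semigroup of positive contractions with $T(0)=I$, not necessarily conservative. The functions $\ell^{i,1}_\lambda,\ell^{i,2}_\lambda$ are the Laplace transforms of the two exit laws of $A_i$ (exits through $0$ and through $r_i$), and the linear system defining $(u_{i,j})$ is uniquely solvable. *)

theory Defs
  imports "HOL-Analysis.Analysis" "HOL-Probability.Probability"
begin

definition Su :: "nat \<Rightarrow> (nat \<Rightarrow> real) \<Rightarrow> (nat \<times> real) set" where
  "Su N r = {(i, x). i \<in> {1..N} \<and> x \<in> {0..r i}}"

definition C2_on :: "real \<Rightarrow> real \<Rightarrow> (real \<Rightarrow> real) \<Rightarrow> (real \<Rightarrow> real) \<Rightarrow> (real \<Rightarrow> real) \<Rightarrow> bool" where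
  "C2_on a b f f1 f2 \<longleftrightarrow>
     (\<forall>x\<in>{a..b}. (f has_real_derivative f1 x) (at x within {a..b}) \<and>
                  (f1 has_real_derivative f2 x) (at x within {a..b})) \<and>
     continuous_on {a..b} f2"

text \<open>Graph of the operator A_i on C[0,r]: f in the domain of A_i and A_i f = h on [0,r].\<close>
definition Ai_rel :: "real \<Rightarrow> real \<Rightarrow> real \<Rightarrow> real \<Rightarrow> real \<Rightarrow> (real \<Rightarrow> real) \<Rightarrow> (real \<Rightarrow> real) \<Rightarrow> bool" where
  "Ai_rel r p q c d f h \<longleftrightarrow>
     (\<exists>f1 f2. C2_on 0 r f f1 f2 \<and>
        p * f2 0 - (1 - p) * f1 0 + c * f 0 = 0 \<and>
        q * f2 r + (1 - q) * f1 r + d * f r = 0 \<and>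
        (\<forall>x\<in>{0..r}. h x = f2 x / 2))"

definition resolvent_i :: "real \<Rightarrow> real \<Rightarrow> real \<Rightarrow> real \<Rightarrow> real \<Rightarrow> real \<Rightarrow> (real \<Rightarrow> real) \<Rightarrow> real \<Rightarrow> real" where
  "resolvent_i lam r p q c d g =
     (THE f. (\<exists>h. Ai_rel r p q c d f h \<and> (\<forall>x\<in>{0..r}. lam * f x - h x = g x)) \<and>
             (\<forall>x. x \<notin> {0..r} \<longrightarrow> f x = 0))"

text \<open>Graph of the operator A on C(S_u): f in the domain of A and A f = h on S_u.
  P i j is the measure p_{i,j}.\<close>
definition A_rel :: "nat \<Rightarrow> (nat \<Rightarrow> real) \<Rightarrow> (nat \<Rightarrow> real) \<Rightarrow> (nat \<Rightarrow> real) \<Rightarrow> (nat \<Rightarrow> real)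
     \<Rightarrow> (nat \<Rightarrow> real) \<Rightarrow> (nat \<Rightarrow> nat \<Rightarrow> (nat \<times> real) measure)
     \<Rightarrow> (nat \<times> real \<Rightarrow> real) \<Rightarrow> (nat \<times> real \<Rightarrow> real) \<Rightarrow> bool" where
  "A_rel N r p q c d P f h \<longleftrightarrow>
     (\<forall>i\<in>{1..N}. \<exists>f1 f2. C2_on 0 (r i) (\<lambda>x. f (i, x)) f1 f2 \<and>
        p i * f2 0 - (1 - p i) * f1 0 + c i * f (i, 0) = c i * integral\<^sup>L (P i 1) f \<and>
        q i * f2 (r i) + (1 - q i) * f1 (r i) + d i * f (i, r i) = d i * integral\<^sup>L (P i 2) f \<and>
        (\<forall>x\<in>{0..r i}. h (i, x) = f2 x / 2))"

definition a11 :: "real \<Rightarrow> real \<Rightarrow> real \<Rightarrow> real" where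
  "a11 lam p c = 2 * lam * p - sqrt (2 * lam) * (1 - p) + c"
definition a12 :: "real \<Rightarrow> real \<Rightarrow> real \<Rightarrow> real" where
  "a12 lam p c = 2 * lam * p + sqrt (2 * lam) * (1 - p) + c"
definition a21 :: "real \<Rightarrow> real \<Rightarrow> real \<Rightarrow> real \<Rightarrow> real" where
  "a21 lam r q d = exp (sqrt (2 * lam) * r) * (2 * lam * q + sqrt (2 * lam) * (1 - q) + d)"
definition a22 :: "real \<Rightarrow> real \<Rightarrow> real \<Rightarrow> real \<Rightarrow> real" where
  "a22 lam r q d = exp (- sqrt (2 * lam) * r) * (2 * lam * q - sqrt (2 * lam) * (1 - q) + d)"
definition Wdet :: "real \<Rightarrow> real \<Rightarrow> real \<Rightarrow> real \<Rightarrow> real \<Rightarrow> real \<Rightarrow> real" where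
  "Wdet lam r p q c d = a11 lam p c * a22 lam r q d - a12 lam p c * a21 lam r q d"

definition ell :: "real \<Rightarrow> (nat \<Rightarrow> real) \<Rightarrow> (nat \<Rightarrow> real) \<Rightarrow> (nat \<Rightarrow> real) \<Rightarrow> (nat \<Rightarrow> real)
     \<Rightarrow> (nat \<Rightarrow> real) \<Rightarrow> nat \<Rightarrow> nat \<Rightarrow> nat \<times> real \<Rightarrow> real" where
  "ell lam r p q c d i j = (\<lambda>(k, x).
     if k = i \<and> x \<in> {0..r i} then
       (let s = sqrt (2 * lam); W = Wdet lam (r i) (p i) (q i) (c i) (d i) in
        if j = 1 then c i / W * (a22 lam (r i) (q i) (d i) * exp (s * x) - a21 lam (r i) (q i) (d i) * exp (- s * x))
        else d i / W * (a11 lam (p i) (c i) * exp (- s * x) - a12 lam (p i) (c i) * exp (s * x)))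
     else 0)"

definition Rdu :: "real \<Rightarrow> nat \<Rightarrow> (nat \<Rightarrow> real) \<Rightarrow> (nat \<Rightarrow> real) \<Rightarrow> (nat \<Rightarrow> real) \<Rightarrow> (nat \<Rightarrow> real)
     \<Rightarrow> (nat \<Rightarrow> real) \<Rightarrow> (nat \<times> real \<Rightarrow> real) \<Rightarrow> nat \<times> real \<Rightarrow> real" where
  "Rdu lam N r p q c d g = (\<lambda>(i, x).
     if i \<in> {1..N} then resolvent_i lam (r i) (p i) (q i) (c i) (d i) (\<lambda>y. g (i, y)) x else 0)"

definition lin_sys :: "real \<Rightarrow> nat \<Rightarrow> (nat \<Rightarrow> real) \<Rightarrow> (nat \<Rightarrow> real) \<Rightarrow> (nat \<Rightarrow> real) \<Rightarrow> (nat \<Rightarrow> real)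
     \<Rightarrow> (nat \<Rightarrow> real) \<Rightarrow> (nat \<Rightarrow> nat \<Rightarrow> (nat \<times> real) measure) \<Rightarrow> (nat \<times> real \<Rightarrow> real)
     \<Rightarrow> (nat \<Rightarrow> nat \<Rightarrow> real) \<Rightarrow> bool" where
  "lin_sys lam N r p q c d P g u \<longleftrightarrow>
     (\<forall>i\<in>{1..N}. \<forall>j\<in>{1,2}.
        u i j = integral\<^sup>L (P i j) (Rdu lam N r p q c d g)
              + (\<Sum>k=1..N. \<Sum>l\<in>{1,2}. u k l * integral\<^sup>L (P i j) (ell lam r p q c d k l)))"

text \<open>Unknown vectors are indexed by {1..N} \<times> {1,2}; entries outside are fixed to 0.\<close>
definition idx_vec :: "nat \<Rightarrow> (nat \<Rightarrow> nat \<Rightarrow> real) \<Rightarrow> bool" where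
  "idx_vec N u \<longleftrightarrow> (\<forall>i j. i \<notin> {1..N} \<or> j \<notin> {1,2} \<longrightarrow> u i j = 0)"

definition usol :: "real \<Rightarrow> nat \<Rightarrow> (nat \<Rightarrow> real) \<Rightarrow> (nat \<Rightarrow> real) \<Rightarrow> (nat \<Rightarrow> real) \<Rightarrow> (nat \<Rightarrow> real)
     \<Rightarrow> (nat \<Rightarrow> real) \<Rightarrow> (nat \<Rightarrow> nat \<Rightarrow> (nat \<times> real) measure) \<Rightarrow> (nat \<times> real \<Rightarrow> real)
     \<Rightarrow> nat \<Rightarrow> nat \<Rightarrow> real" where
  "usol lam N r p q c d P g = (THE u. idx_vec N u \<and> lin_sys lam N r p q c d P g u)"

definition Rco :: "real \<Rightarrow> nat \<Rightarrow> (nat \<Rightarrow> real) \<Rightarrow> (nat \<Rightarrow> real) \<Rightarrow> (nat \<Rightarrow> real) \<Rightarrow> (nat \<Rightarrow> real)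
     \<Rightarrow> (nat \<Rightarrow> real) \<Rightarrow> (nat \<Rightarrow> nat \<Rightarrow> (nat \<times> real) measure) \<Rightarrow> (nat \<times> real \<Rightarrow> real)
     \<Rightarrow> nat \<times> real \<Rightarrow> real" where
  "Rco lam N r p q c d P g = (\<lambda>y. Rdu lam N r p q c d g y
     + (\<Sum>i=1..N. \<Sum>j\<in>{1,2}. usol lam N r p q c d P g i j * ell lam r p q c d i j y))"

end

theory Submission
  imports Defs
begin

(* On a single edge, the equation lam f - f''/2 = g with the boundary conditions of A_i, but with
   arbitrary right-hand sides c a and d b, is uniquely solvable: homogeneous solutions are
   combinations of exp (+-s x), and their boundary values form a 2x2 system with determinant
   W < 0. By linearity the solution is R_{lam,i} g + a l^{i,1} + b l^{i,2}. A function f satisfies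
   lam f - A f = g exactly when on every edge it solves this problem with a and b the integrals
   of f against p_{i,1} and p_{i,2}. Hence f = R^du g + sum v_{k,l} l^{k,l}, where v collects
   these integrals; integrating this identity shows that v solves the linear system, so v = u. *)

lemma C2_on_cong:
  assumes "C2_on a b f f1 f2" "\<forall>x\<in>{a..b}. g x = f x"
  shows "C2_on a b g f1 f2"
  using assms unfolding C2_on_def
  by (auto intro: has_field_derivative_transform_within[where d=1])

lemma C2_on_add_scaled:
  assumes "C2_on a b f f1 f2" "C2_on a b g g1 g2"
  shows "C2_on a b (\<lambda>x. f x + k * g x) (\<lambda>x. f1 x + k * g1 x) (\<lambda>x. f2 x + k * g2 x)"
  using assms unfolding C2_on_def
  by (auto intro!: derivative_eq_intros continuous_intros)

lemma C2_on_imp_continuous_on: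
  assumes "C2_on a b f f1 f2"
  shows "continuous_on {a..b} f"
  using assms unfolding C2_on_def by (auto intro: DERIV_continuous_on)

lemma first_order_linear_ode_unique:
  fixes y z h :: "real \<Rightarrow> real"
  assumes y: "\<forall>x\<in>{0..r}. (y has_real_derivative k * y x + h x) (at x within {0..r})"
    and z: "\<forall>x\<in>{0..r}. (z has_real_derivative k * z x + h x) (at x within {0..r})"
    and "y 0 = z 0" "x \<in> {0..r}"
  shows "y x = z x"
proof -
  have "\<exists>C. \<forall>x\<in>{0..r}. (y x - z x) * exp (- k * x) = C"
  proof (rule has_field_derivative_zero_constant)
    fix x assume "x \<in> {0..r}"
    with y z have "((\<lambda>x. (y x - z x) * exp (- k * x)) has_real_derivative
        (k * y x + h x - (k * z x + h x)) * exp (- k * x) + (y x - z x) * (exp (- k * x) * - k))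
        (at x within {0..r})"
      by (auto intro!: derivative_eq_intros)
    then show "((\<lambda>x. (y x - z x) * exp (- k * x)) has_real_derivative 0) (at x within {0..r})"
      by (simp add: algebra_simps)
  qed auto
  then obtain C where C: "\<And>x. x \<in> {0..r} \<Longrightarrow> (y x - z x) * exp (- k * x) = C" by blast
  have "0 \<in> {0..r}" using \<open>x \<in> {0..r}\<close> by auto
  with C \<open>y 0 = z 0\<close> have "C = 0" by force
  with C[OF \<open>x \<in> {0..r}\<close>] show ?thesis by simp
qed

(* For a = b = 0 this is the resolvent equation of A_i; on S_u, a and b become the integrals
   of f against p_{i,1} and p_{i,2}. *)
definition wentzell_bvp :: "real \<Rightarrow> real \<Rightarrow> real \<Rightarrow> real \<Rightarrow> real \<Rightarrow> real \<Rightarrow> (real \<Rightarrow> real)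
     \<Rightarrow> real \<Rightarrow> real \<Rightarrow> (real \<Rightarrow> real) \<Rightarrow> bool" where
  "wentzell_bvp lam r p q c d g a b f \<longleftrightarrow>
     (\<exists>f1 f2. C2_on 0 r f f1 f2 \<and> (\<forall>x\<in>{0..r}. lam * f x - f2 x / 2 = g x) \<and>
        p * f2 0 - (1 - p) * f1 0 + c * f 0 = c * a \<and>
        q * f2 r + (1 - q) * f1 r + d * f r = d * b)"

lemma wentzell_bvpI:
  assumes "C2_on 0 r f f1 f2" "\<forall>x\<in>{0..r}. lam * f x - f2 x / 2 = g x"
    "p * f2 0 - (1 - p) * f1 0 + c * f 0 = c * a" "q * f2 r + (1 - q) * f1 r + d * f r = d * b"
  shows "wentzell_bvp lam r p q c d g a b f"
  using assms unfolding wentzell_bvp_def by blast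

lemma wentzell_bvpE:
  assumes "wentzell_bvp lam r p q c d g a b f"
  obtains f1 f2 where "C2_on 0 r f f1 f2" "\<forall>x\<in>{0..r}. lam * f x - f2 x / 2 = g x"
    "p * f2 0 - (1 - p) * f1 0 + c * f 0 = c * a" "q * f2 r + (1 - q) * f1 r + d * f r = d * b"
  using assms unfolding wentzell_bvp_def by blast

lemma wentzell_bvp_cong:
  assumes "wentzell_bvp lam r p q c d g a b f" "0 \<le> r"
    and "\<forall>x\<in>{0..r}. f' x = f x" "\<forall>x\<in>{0..r}. g' x = g x" "a' = a" "b' = b"
  shows "wentzell_bvp lam r p q c d g' a' b' f'"
proof -
  obtain f1 f2 where "C2_on 0 r f f1 f2" "\<forall>x\<in>{0..r}. lam * f x - f2 x / 2 = g x"
    "p * f2 0 - (1 - p) * f1 0 + c * f 0 = c * a" "q * f2 r + (1 - q) * f1 r + d * f r = d * b"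
    using assms(1) by (rule wentzell_bvpE)
  with assms(2-) show ?thesis
    by (intro wentzell_bvpI[OF C2_on_cong]) auto
qed

lemma wentzell_bvp_add_scaled:
  assumes "wentzell_bvp lam r p q c d g a b f" "wentzell_bvp lam r p q c d g' a' b' f'"
  shows "wentzell_bvp lam r p q c d (\<lambda>x. g x + k * g' x) (a + k * a') (b + k * b')
           (\<lambda>x. f x + k * f' x)"
proof -
  obtain f1 f2 where "C2_on 0 r f f1 f2" "\<forall>x\<in>{0..r}. lam * f x - f2 x / 2 = g x"
    "p * f2 0 - (1 - p) * f1 0 + c * f 0 = c * a" "q * f2 r + (1 - q) * f1 r + d * f r = d * b"
    using assms(1) by (rule wentzell_bvpE)
  moreover obtain f1' f2' where "C2_on 0 r f' f1' f2'"
    "\<forall>x\<in>{0..r}. lam * f' x - f2' x / 2 = g' x"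
    "k * (p * f2' 0 - (1 - p) * f1' 0 + c * f' 0) = k * (c * a')"
    "k * (q * f2' r + (1 - q) * f1' r + d * f' r) = k * (d * b')"
    using assms(2) by (auto elim: wentzell_bvpE)
  ultimately show ?thesis
    by (intro wentzell_bvpI[OF C2_on_add_scaled]) (auto simp: algebra_simps)
qed

lemma homogeneous_solution_exp_form:
  fixes s :: real
  assumes "s \<noteq> 0" and w: "C2_on 0 r w w1 w2" and ode: "\<forall>x\<in>{0..r}. w2 x = s * s * w x"
  obtains A B where "\<forall>x\<in>{0..r}. w x = A * exp (s * x) + B * exp (- s * x) \<and>
                                w1 x = s * A * exp (s * x) - s * B * exp (- s * x)"
proof -
  (* w' - s w solves z' = - s z, and then w' = s w + z is again a first-order equation. *)
  define A where "A = (w 0 + w1 0 / s) / 2"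
  define B where "B = (w 0 - w1 0 / s) / 2"
  define E where "E x = A * exp (s * x) + B * exp (- s * x)" for x
  define E1 where "E1 x = s * A * exp (s * x) - s * B * exp (- s * x)" for x
  have dE: "(E has_real_derivative E1 x) (at x within {0..r})"
    and dE1: "(E1 has_real_derivative s * s * E x) (at x within {0..r})" for x
    unfolding E_def E1_def by (auto intro!: derivative_eq_intros simp: algebra_simps)
  have dw: "(w has_real_derivative w1 x) (at x within {0..r})"
    and dw1: "(w1 has_real_derivative s * s * w x) (at x within {0..r})"
    if "x \<in> {0..r}" for x
    using w ode that unfolding C2_on_def by auto
  have "w1 x - s * w x = E1 x - s * E x" if "x \<in> {0..r}" for x
  proof (rule first_order_linear_ode_unique[where k="- s" and h="\<lambda>_. 0", OF _ _ _ that])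
    show "\<forall>x\<in>{0..r}. ((\<lambda>x. w1 x - s * w x) has_real_derivative
              - s * (w1 x - s * w x) + 0) (at x within {0..r})"
      using DERIV_diff[OF dw1 DERIV_cmult[OF dw]] by (simp add: algebra_simps)
    show "\<forall>x\<in>{0..r}. ((\<lambda>x. E1 x - s * E x) has_real_derivative
              - s * (E1 x - s * E x) + 0) (at x within {0..r})"
      using DERIV_diff[OF dE1 DERIV_cmult[OF dE]] by (simp add: algebra_simps)
    show "w1 0 - s * w 0 = E1 0 - s * E 0"
      using \<open>s \<noteq> 0\<close> by (simp add: A_def B_def E_def E1_def field_simps)
  qed
  moreover have "w x = E x" if "x \<in> {0..r}" for x
  proof (rule first_order_linear_ode_unique[where k=s and h="\<lambda>x. w1 x - s * w x", OF _ _ _ that])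
    show "\<forall>x\<in>{0..r}. (w has_real_derivative s * w x + (w1 x - s * w x)) (at x within {0..r})"
      using dw by simp
    show "\<forall>x\<in>{0..r}. (E has_real_derivative s * E x + (w1 x - s * w x)) (at x within {0..r})"
      using dE calculation by simp
    show "w 0 = E 0"
      by (simp add: A_def B_def E_def field_simps)
  qed
  ultimately show thesis
    by (intro that[of A B]) (auto simp: E_def E1_def)
qed

lemma wentzell_bvp_exp_comb:
  assumes "lam > 0"
    and "c * a = A * a11 lam p c + B * a12 lam p c"
    and "d * b = A * a21 lam r q d + B * a22 lam r q d"
  shows "wentzell_bvp lam r p q c d (\<lambda>_. 0) a b
           (\<lambda>x. A * exp (sqrt (2 * lam) * x) + B * exp (- sqrt (2 * lam) * x))"
proof -
  define s where "s = sqrt (2 * lam)"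
  have ss: "s * (s * y) = 2 * lam * y" for y
    using assms(1) by (simp add: s_def flip: mult.assoc)
  show ?thesis
    unfolding s_def[symmetric]
  proof (rule wentzell_bvpI)
    show "C2_on 0 r (\<lambda>x. A * exp (s * x) + B * exp (- s * x))
            (\<lambda>x. s * A * exp (s * x) - s * B * exp (- s * x))
            (\<lambda>x. 2 * lam * (A * exp (s * x) + B * exp (- s * x)))"
      unfolding C2_on_def
      by (auto intro!: derivative_eq_intros continuous_intros simp: algebra_simps ss)
  qed (use assms(2,3) in \<open>auto simp: a11_def a12_def a21_def a22_def s_def algebra_simps\<close>)
qed

lemma exists_particular_solution:
  assumes "lam > 0" "continuous_on {0..r} g"
  obtains f f1 f2 where "C2_on 0 r f f1 f2" "\<forall>x\<in>{0..r}. lam * f x - f2 x / 2 = g x"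
proof -
  define s where "s = sqrt (2 * lam)"
  have "s > 0" using assms(1) by (simp add: s_def)
  (* variation of constants: f = exp (s x) U + exp (- s x) V with U' exp (s x) + V' exp (- s x) = 0 *)
  have ss: "s * (s * y) = 2 * lam * y" for y
    using assms(1) by (simp add: s_def flip: mult.assoc)
  have e: "exp (s * x) * exp (- (s * x)) = 1" for x
    by (simp flip: exp_add)
  define U where "U x = integral {0..x} (\<lambda>y. - exp (- s * y) * g y / s)" for x
  define V where "V x = integral {0..x} (\<lambda>y. exp (s * y) * g y / s)" for x
  have dU: "(U has_real_derivative - exp (- s * x) * g x / s) (at x within {0..r})"
    and dV: "(V has_real_derivative exp (s * x) * g x / s) (at x within {0..r})"
    if "x \<in> {0..r}" for x
    unfolding U_def V_def has_real_derivative_iff_has_vector_derivative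
    by (rule integral_has_vector_derivative[OF _ that];
        use assms(2) \<open>s > 0\<close> in \<open>auto intro!: continuous_intros\<close>)+
  define f where "f x = exp (s * x) * U x + exp (- s * x) * V x" for x
  define f1 where "f1 x = s * exp (s * x) * U x - s * exp (- s * x) * V x" for x
  have df: "(f has_real_derivative f1 x) (at x within {0..r})"
    and df1: "(f1 has_real_derivative 2 * lam * f x - 2 * g x) (at x within {0..r})"
    if "x \<in> {0..r}" for x
    using dU[OF that] dV[OF that] \<open>s > 0\<close> unfolding f_def f1_def
    by (auto intro!: derivative_eq_intros simp: field_simps ss e)
  have "continuous_on {0..r} (\<lambda>x. 2 * lam * f x - 2 * g x)"
    using DERIV_continuous_on[OF df] assms(2) by (auto intro!: continuous_intros)
  with df df1 have "C2_on 0 r f f1 (\<lambda>x. 2 * lam * f x - 2 * g x)"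
    unfolding C2_on_def by blast
  then show thesis
    by (rule that) (simp add: field_simps)
qed

definition ell_left :: "real \<Rightarrow> real \<Rightarrow> real \<Rightarrow> real \<Rightarrow> real \<Rightarrow> real \<Rightarrow> real \<Rightarrow> real" where
  "ell_left lam r p q c d x = c / Wdet lam r p q c d *
     (a22 lam r q d * exp (sqrt (2 * lam) * x) - a21 lam r q d * exp (- sqrt (2 * lam) * x))"

definition ell_right :: "real \<Rightarrow> real \<Rightarrow> real \<Rightarrow> real \<Rightarrow> real \<Rightarrow> real \<Rightarrow> real \<Rightarrow> real" where
  "ell_right lam r p q c d x = d / Wdet lam r p q c d *
     (a11 lam p c * exp (- sqrt (2 * lam) * x) - a12 lam p c * exp (sqrt (2 * lam) * x))"

locale wentzell_interval =
  fixes lam r p q c d :: real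
  assumes interval_params: "lam > 0" "r > 0" "p \<in> {0..1}" "q \<in> {0..1}" "c > 0" "d > 0"
begin

lemma Wdet_neg: "Wdet lam r p q c d < 0"
proof -
  define s where "s = sqrt (2 * lam)"
  define K where "K = 2 * lam * q + s * (1 - q) + d"
  have "s > 0" using interval_params by (simp add: s_def)
  then have "K > 0" "a12 lam p c > 0" "\<bar>a11 lam p c\<bar> \<le> a12 lam p c"
    using interval_params unfolding K_def a11_def a12_def s_def[symmetric]
    by (auto simp: abs_le_iff intro!: add_nonneg_pos add_nonneg_nonneg mult_nonneg_nonneg)
  have "\<bar>a22 lam r q d\<bar> \<le> exp (- s * r) * K"
    using interval_params \<open>s > 0\<close> unfolding a22_def s_def[symmetric] K_def
    by (auto simp: abs_mult abs_le_iff intro!: mult_nonneg_nonneg)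
  also have "\<dots> < exp (s * r) * K" using \<open>K > 0\<close> \<open>s > 0\<close> interval_params by simp
  also have "\<dots> = a21 lam r q d" unfolding a21_def K_def s_def ..
  finally have a22: "\<bar>a22 lam r q d\<bar> < a21 lam r q d" .
  have "a11 lam p c * a22 lam r q d \<le> \<bar>a11 lam p c\<bar> * \<bar>a22 lam r q d\<bar>"
    by (metis abs_ge_self abs_mult)
  also have "\<dots> \<le> a12 lam p c * \<bar>a22 lam r q d\<bar>"
    using \<open>\<bar>a11 lam p c\<bar> \<le> a12 lam p c\<close> by (simp add: mult_right_mono)
  also have "\<dots> < a12 lam p c * a21 lam r q d" using \<open>a12 lam p c > 0\<close> a22 by simp
  finally show ?thesis unfolding Wdet_def by simp
qed

lemma wentzell_bvp_homogeneous_zero: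
  assumes "wentzell_bvp lam r p q c d (\<lambda>_. 0) 0 0 w" "x \<in> {0..r}"
  shows "w x = 0"
proof -
  define s where "s = sqrt (2 * lam)"
  have "s \<noteq> 0" "s * s = 2 * lam" using interval_params by (auto simp: s_def)
  obtain w1 w2 where w: "C2_on 0 r w w1 w2" and ode: "\<forall>x\<in>{0..r}. lam * w x - w2 x / 2 = 0"
    and bc: "p * w2 0 - (1 - p) * w1 0 + c * w 0 = 0" "q * w2 r + (1 - q) * w1 r + d * w r = 0"
    using assms(1) by (auto elim: wentzell_bvpE)
  have ode': "\<forall>x\<in>{0..r}. w2 x = s * s * w x" "\<forall>x\<in>{0..r}. w2 x = 2 * lam * w x"
    using ode \<open>s * s = 2 * lam\<close> by auto
  obtain A B where AB: "\<forall>x\<in>{0..r}. w x = A * exp (s * x) + B * exp (- s * x) \<and>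
                                w1 x = s * A * exp (s * x) - s * B * exp (- s * x)"
    using homogeneous_solution_exp_form[OF \<open>s \<noteq> 0\<close> w ode'(1)] by blast
  have "0 \<in> {0..r}" "r \<in> {0..r}" using interval_params by auto
  then have at0: "w 0 = A + B" "w1 0 = s * A - s * B" "w2 0 = 2 * lam * (A + B)"
    and atr: "w r = A * exp (s * r) + B * exp (- s * r)"
      "w1 r = s * A * exp (s * r) - s * B * exp (- s * r)" "w2 r = 2 * lam * w r"
    using AB ode'(2) by auto
  have "A * a11 lam p c + B * a12 lam p c = p * w2 0 - (1 - p) * w1 0 + c * w 0"
    unfolding at0 a11_def a12_def s_def[symmetric] by (simp add: algebra_simps)
  with bc(1) have e0: "A * a11 lam p c + B * a12 lam p c = 0" by simp
  have "A * a21 lam r q d + B * a22 lam r q d = q * w2 r + (1 - q) * w1 r + d * w r"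
    unfolding atr a21_def a22_def s_def[symmetric] by (simp add: algebra_simps)
  with bc(2) have er: "A * a21 lam r q d + B * a22 lam r q d = 0" by simp
  have "A * Wdet lam r p q c d = a22 lam r q d * (A * a11 lam p c + B * a12 lam p c)
                                - a12 lam p c * (A * a21 lam r q d + B * a22 lam r q d)"
   and "B * Wdet lam r p q c d = a11 lam p c * (A * a21 lam r q d + B * a22 lam r q d)
                                - a21 lam r q d * (A * a11 lam p c + B * a12 lam p c)"
    unfolding Wdet_def by (simp_all add: algebra_simps)
  then have "A * Wdet lam r p q c d = 0" "B * Wdet lam r p q c d = 0"
    unfolding e0 er by simp_all
  with Wdet_neg have "A = 0" "B = 0" by simp_all
  with AB assms(2) show ?thesis by simp
qed

lemma wentzell_bvp_unique:
  assumes "wentzell_bvp lam r p q c d g a b f" "wentzell_bvp lam r p q c d g a b h" "x \<in> {0..r}"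
  shows "f x = h x"
proof -
  have "wentzell_bvp lam r p q c d (\<lambda>_. 0) 0 0 (\<lambda>x. f x + -1 * h x)"
    by (rule wentzell_bvp_cong[OF wentzell_bvp_add_scaled[OF assms(1,2), where k="-1"]])
      (use interval_params in auto)
  from wentzell_bvp_homogeneous_zero[OF this assms(3)] show ?thesis by simp
qed

lemma wentzell_bvp_ell_left: "wentzell_bvp lam r p q c d (\<lambda>_. 0) 1 0 (ell_left lam r p q c d)"
proof -
  let ?W = "Wdet lam r p q c d"
  have "k * a22 lam r q d * a11 lam p c + - (k * a21 lam r q d) * a12 lam p c = k * ?W" for k
    unfolding Wdet_def by (simp add: algebra_simps)
  from this[of "c / ?W"] have "wentzell_bvp lam r p q c d (\<lambda>_. 0) 1 0
      (\<lambda>x. c / ?W * a22 lam r q d * exp (sqrt (2 * lam) * x)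
           + - (c / ?W * a21 lam r q d) * exp (- sqrt (2 * lam) * x))"
    using interval_params Wdet_neg by (intro wentzell_bvp_exp_comb) simp_all
  then show ?thesis
    unfolding ell_left_def by (simp add: algebra_simps)
qed

lemma wentzell_bvp_ell_right: "wentzell_bvp lam r p q c d (\<lambda>_. 0) 0 1 (ell_right lam r p q c d)"
proof -
  let ?W = "Wdet lam r p q c d"
  have "- (k * a12 lam p c) * a21 lam r q d + k * a11 lam p c * a22 lam r q d = k * ?W" for k
    unfolding Wdet_def by (simp add: algebra_simps)
  from this[of "d / ?W"] have "wentzell_bvp lam r p q c d (\<lambda>_. 0) 0 1
      (\<lambda>x. - (d / ?W * a12 lam p c) * exp (sqrt (2 * lam) * x)
           + d / ?W * a11 lam p c * exp (- sqrt (2 * lam) * x))"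
    using interval_params Wdet_neg by (intro wentzell_bvp_exp_comb) simp_all
  then show ?thesis
    unfolding ell_right_def by (simp add: algebra_simps)
qed

lemma wentzell_bvp_exists:
  assumes "continuous_on {0..r} g"
  shows "\<exists>f. wentzell_bvp lam r p q c d g a b f"
proof -
  obtain f f1 f2 where f: "C2_on 0 r f f1 f2" "\<forall>x\<in>{0..r}. lam * f x - f2 x / 2 = g x"
    using exists_particular_solution[OF _ assms] interval_params by blast
  (* f meets the boundary conditions with some data a0, b0; the exit functions correct them. *)
  define a0 where "a0 = (p * f2 0 - (1 - p) * f1 0 + c * f 0) / c"
  define b0 where "b0 = (q * f2 r + (1 - q) * f1 r + d * f r) / d"
  have "wentzell_bvp lam r p q c d g a0 b0 f"
    using interval_params by (intro wentzell_bvpI[OF f]) (auto simp: a0_def b0_def)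
  then have "wentzell_bvp lam r p q c d (\<lambda>x. g x + (a - a0) * 0 + (b - b0) * 0)
      (a0 + (a - a0) * 1 + (b - b0) * 0) (b0 + (a - a0) * 0 + (b - b0) * 1)
      (\<lambda>x. f x + (a - a0) * ell_left lam r p q c d x + (b - b0) * ell_right lam r p q c d x)"
    by (intro wentzell_bvp_add_scaled wentzell_bvp_ell_left wentzell_bvp_ell_right)
  then show ?thesis
    by auto
qed

lemma Ai_rel_resolvent_iff_wentzell_bvp:
  "(\<exists>h. Ai_rel r p q c d f h \<and> (\<forall>x\<in>{0..r}. lam * f x - h x = g x))
     \<longleftrightarrow> wentzell_bvp lam r p q c d g 0 0 f"
proof
  assume "\<exists>h. Ai_rel r p q c d f h \<and> (\<forall>x\<in>{0..r}. lam * f x - h x = g x)"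
  then obtain h f1 f2 where f: "C2_on 0 r f f1 f2"
    "p * f2 0 - (1 - p) * f1 0 + c * f 0 = 0" "q * f2 r + (1 - q) * f1 r + d * f r = 0"
    and h: "\<forall>x\<in>{0..r}. h x = f2 x / 2" "\<forall>x\<in>{0..r}. lam * f x - h x = g x"
    unfolding Ai_rel_def by blast
  have "lam * f x - f2 x / 2 = g x" if "x \<in> {0..r}" for x
  proof -
    from h that have "h x = f2 x / 2" "lam * f x - h x = g x" by auto
    then show ?thesis by linarith
  qed
  with f show "wentzell_bvp lam r p q c d g 0 0 f"
    by (intro wentzell_bvpI) auto
next
  assume "wentzell_bvp lam r p q c d g 0 0 f"
  then obtain f1 f2 where "C2_on 0 r f f1 f2" "\<forall>x\<in>{0..r}. lam * f x - f2 x / 2 = g x"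
    "p * f2 0 - (1 - p) * f1 0 + c * f 0 = 0" "q * f2 r + (1 - q) * f1 r + d * f r = 0"
    by (auto elim: wentzell_bvpE)
  then show "\<exists>h. Ai_rel r p q c d f h \<and> (\<forall>x\<in>{0..r}. lam * f x - h x = g x)"
    unfolding Ai_rel_def by (intro exI[of _ "\<lambda>x. f2 x / 2"]) auto
qed

lemma wentzell_bvp_resolvent_i:
  assumes "continuous_on {0..r} g"
  shows "wentzell_bvp lam r p q c d g 0 0 (resolvent_i lam r p q c d g)"
proof -
  let ?Q = "\<lambda>f. wentzell_bvp lam r p q c d g 0 0 f \<and> (\<forall>x. x \<notin> {0..r} \<longrightarrow> f x = 0)"
  obtain f where f: "wentzell_bvp lam r p q c d g 0 0 f"
    using wentzell_bvp_exists[OF assms] by blast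
  have ex: "?Q (\<lambda>x. if x \<in> {0..r} then f x else 0)"
    using interval_params by (auto intro: wentzell_bvp_cong[OF f])
  have uniq: "f' = f''" if "?Q f'" "?Q f''" for f' f''
  proof
    fix x
    show "f' x = f'' x"
      using that wentzell_bvp_unique[of g 0 0 f' f'' x] by (cases "x \<in> {0..r}") auto
  qed
  have "?Q (THE f. ?Q f)"
    by (rule theI[of ?Q, OF ex uniq[OF _ ex]])
  then show ?thesis
    unfolding resolvent_i_def Ai_rel_resolvent_iff_wentzell_bvp by simp
qed

end

lemma Su_eq_UN: "Su N r = (\<Union>i\<in>{1..N}. {i} \<times> {0..r i})"
  unfolding Su_def by auto

lemma compact_Su: "compact (Su N r)"
  unfolding Su_eq_UN by (intro compact_UN compact_Times) auto

lemma continuous_on_Su: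
  assumes "\<forall>i\<in>{1..N}. continuous_on {0..r i} (\<lambda>x. \<phi> (i, x))"
  shows "continuous_on (Su N r) \<phi>"
  unfolding Su_eq_UN
proof (rule continuous_on_closed_Union)
  fix i assume i: "i \<in> {1..N}"
  have "continuous_on ({i} \<times> {0..r i}) (\<lambda>y. \<phi> (i, snd y))"
    by (rule continuous_on_compose2[OF assms[rule_format, OF i] continuous_on_snd]) auto
  then show "continuous_on ({i} \<times> {0..r i}) \<phi>"
    by (rule continuous_on_cong[THEN iffD1, rotated 2]) auto
qed (auto intro: closed_Times)

lemma continuous_on_Su_slice:
  assumes "continuous_on (Su N r) \<phi>" "i \<in> {1..N}"
  shows "continuous_on {0..r i} (\<lambda>x. \<phi> (i, x))"
  using assms by (intro continuous_on_compose2[OF assms(1)]) (auto intro!: continuous_intros simp: Su_def)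

lemma space_eq_Su:
  assumes "sets M = sets (restrict_space borel (Su N r))"
  shows "space M = Su N r"
  using sets_eq_imp_space_eq[OF assms] by (simp add: space_restrict_space)

lemma integrable_continuous_on_Su:
  fixes \<phi> :: "nat \<times> real \<Rightarrow> real"
  assumes sets: "sets M = sets (restrict_space borel (Su N r))"
    and finite: "emeasure M (space M) \<noteq> \<infinity>" and cont: "continuous_on (Su N r) \<phi>"
  shows "integrable M \<phi>"
proof -
  interpret finite_measure M
    using finite by (rule finite_measureI)
  obtain B where "\<forall>y\<in>Su N r. norm (\<phi> y) \<le> B"
    using compact_imp_bounded[OF compact_continuous_image[OF cont compact_Su]]
    by (auto simp: bounded_iff)
  then show ?thesis
  proof (intro integrable_const_bound[where B=B] AE_I2)
    show "\<phi> \<in> borel_measurable M"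
      by (subst measurable_cong_sets[OF sets refl])
        (rule borel_measurable_continuous_on_restrict[OF cont])
  qed (simp add: space_eq_Su[OF sets])
qed

lemma ell_eq:
  "ell lam r p q c d k l (i, x) =
     (if k = i \<and> x \<in> {0..r i} then
        if l = 1 then ell_left lam (r i) (p i) (q i) (c i) (d i) x
        else ell_right lam (r i) (p i) (q i) (c i) (d i) x
      else 0)"
  by (simp add: ell_def ell_left_def ell_right_def Let_def)

definition Rdu_plus_ell :: "real \<Rightarrow> nat \<Rightarrow> (nat \<Rightarrow> real) \<Rightarrow> (nat \<Rightarrow> real) \<Rightarrow> (nat \<Rightarrow> real)
     \<Rightarrow> (nat \<Rightarrow> real) \<Rightarrow> (nat \<Rightarrow> real) \<Rightarrow> (nat \<times> real \<Rightarrow> real) \<Rightarrow> (nat \<Rightarrow> nat \<Rightarrow> real)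
     \<Rightarrow> nat \<times> real \<Rightarrow> real" where
  "Rdu_plus_ell lam N r p q c d g v = (\<lambda>y. Rdu lam N r p q c d g y
     + (\<Sum>k=1..N. \<Sum>l\<in>{1,2}. v k l * ell lam r p q c d k l y))"

lemma Rdu_plus_ell_slice:
  assumes "i \<in> {1..N}" "x \<in> {0..r i}"
  shows "Rdu_plus_ell lam N r p q c d g v (i, x) =
           resolvent_i lam (r i) (p i) (q i) (c i) (d i) (\<lambda>y. g (i, y)) x
           + v i 1 * ell_left lam (r i) (p i) (q i) (c i) (d i) x
           + v i 2 * ell_right lam (r i) (p i) (q i) (c i) (d i) x"
proof -
  have "(\<Sum>k=1..N. \<Sum>l\<in>{1,2}. v k l * ell lam r p q c d k l (i, x)) =
        (\<Sum>k=1..N. if k = i then v i 1 * ell_left lam (r i) (p i) (q i) (c i) (d i) x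
                                + v i 2 * ell_right lam (r i) (p i) (q i) (c i) (d i) x else 0)"
    using assms by (intro sum.cong) (auto simp: ell_eq)
  also have "\<dots> = v i 1 * ell_left lam (r i) (p i) (q i) (c i) (d i) x
                 + v i 2 * ell_right lam (r i) (p i) (q i) (c i) (d i) x"
    using assms(1) by simp
  finally show ?thesis
    using assms(1) by (simp add: Rdu_plus_ell_def Rdu_def)
qed

lemma A_rel_iff_wentzell_bvp:
  "A_rel N r p q c d P f (\<lambda>y. lam * f y - g y) \<longleftrightarrow>
     (\<forall>i\<in>{1..N}. wentzell_bvp lam (r i) (p i) (q i) (c i) (d i) (\<lambda>x. g (i, x))
                   (integral\<^sup>L (P i 1) f) (integral\<^sup>L (P i 2) f) (\<lambda>x. f (i, x)))"
  unfolding A_rel_def wentzell_bvp_def by (intro ball_cong refl ex_cong1) auto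

lemma wentzell_bvp_imp_continuous_on:
  assumes "wentzell_bvp lam r p q c d g a b f"
  shows "continuous_on {0..r} f"
  using assms by (auto elim: wentzell_bvpE intro: C2_on_imp_continuous_on)

lemma continuous_on_ell: "continuous_on (Su N r) (ell lam r p q c d k l)"
proof (rule continuous_on_Su, intro ballI)
  fix i
  have "continuous_on {0..r i} (ell_left lam (r i) (p i) (q i) (c i) (d i))"
    "continuous_on {0..r i} (ell_right lam (r i) (p i) (q i) (c i) (d i))"
    unfolding ell_left_def ell_right_def by (intro continuous_on_mult_left continuous_intros)+
  then have "continuous_on {0..r i} (\<lambda>x.
      if k = i then if l = 1 then ell_left lam (r i) (p i) (q i) (c i) (d i) x
                    else ell_right lam (r i) (p i) (q i) (c i) (d i) x
      else 0)"
    by (cases "k = i"; cases "l = 1") auto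
  then show "continuous_on {0..r i} (\<lambda>x. ell lam r p q c d k l (i, x))"
    by (rule continuous_on_cong[THEN iffD1, rotated 2]) (auto simp: ell_eq)
qed

locale wentzell_family =
  fixes N :: nat and r p q c d :: "nat \<Rightarrow> real"
    and P :: "nat \<Rightarrow> nat \<Rightarrow> (nat \<times> real) measure"
    and lam :: real and g :: "nat \<times> real \<Rightarrow> real"
  assumes params: "\<forall>i\<in>{1..N}. r i > 0 \<and> p i \<in> {0..1} \<and> q i \<in> {0..1} \<and> c i > 0 \<and> d i > 0"
    and measures: "\<forall>i\<in>{1..N}. \<forall>j\<in>{1,2}. sets (P i j) = sets (restrict_space borel (Su N r)) \<and>
           emeasure (P i j) (space (P i j)) \<le> 1"
    and lam_pos: "lam > 0"
    and g_cont: "continuous_on (Su N r) g"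
begin

lemma wentzell_interval_edge: "i \<in> {1..N} \<Longrightarrow> wentzell_interval lam (r i) (p i) (q i) (c i) (d i)"
  using params lam_pos by unfold_locales auto

lemma wentzell_bvp_Rdu_plus_ell:
  assumes i: "i \<in> {1..N}"
  shows "wentzell_bvp lam (r i) (p i) (q i) (c i) (d i) (\<lambda>x. g (i, x)) (v i 1) (v i 2)
           (\<lambda>x. Rdu_plus_ell lam N r p q c d g v (i, x))"
proof -
  interpret wentzell_interval lam "r i" "p i" "q i" "c i" "d i"
    using i by (rule wentzell_interval_edge)
  have "wentzell_bvp lam (r i) (p i) (q i) (c i) (d i)
      (\<lambda>x. g (i, x) + v i 1 * 0 + v i 2 * 0) (0 + v i 1 * 1 + v i 2 * 0) (0 + v i 1 * 0 + v i 2 * 1)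
      (\<lambda>x. resolvent_i lam (r i) (p i) (q i) (c i) (d i) (\<lambda>y. g (i, y)) x
           + v i 1 * ell_left lam (r i) (p i) (q i) (c i) (d i) x
           + v i 2 * ell_right lam (r i) (p i) (q i) (c i) (d i) x)"
    using continuous_on_Su_slice[OF g_cont i]
    by (intro wentzell_bvp_add_scaled wentzell_bvp_resolvent_i wentzell_bvp_ell_left
        wentzell_bvp_ell_right)
  then show ?thesis
    by (rule wentzell_bvp_cong) (use interval_params i in \<open>simp_all add: Rdu_plus_ell_slice\<close>)
qed

lemma continuous_on_Rdu: "continuous_on (Su N r) (Rdu lam N r p q c d g)"
proof (rule continuous_on_Su, intro ballI)
  fix i assume i: "i \<in> {1..N}"
  interpret wentzell_interval lam "r i" "p i" "q i" "c i" "d i"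
    using i by (rule wentzell_interval_edge)
  have "continuous_on {0..r i} (resolvent_i lam (r i) (p i) (q i) (c i) (d i) (\<lambda>y. g (i, y)))"
    using continuous_on_Su_slice[OF g_cont i]
    by (intro wentzell_bvp_imp_continuous_on[OF wentzell_bvp_resolvent_i])
  then show "continuous_on {0..r i} (\<lambda>x. Rdu lam N r p q c d g (i, x))"
    using i by (simp add: Rdu_def)
qed

lemma integral_Rdu_plus_ell:
  assumes "i \<in> {1..N}" "j \<in> {1,2}"
  shows "integral\<^sup>L (P i j) (Rdu_plus_ell lam N r p q c d g v) =
           integral\<^sup>L (P i j) (Rdu lam N r p q c d g)
           + (\<Sum>k=1..N. \<Sum>l\<in>{1,2}. v k l * integral\<^sup>L (P i j) (ell lam r p q c d k l))"
proof -
  have sets: "sets (P i j) = sets (restrict_space borel (Su N r))"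
    and "emeasure (P i j) (space (P i j)) \<le> 1"
    using measures assms by auto
  then have finite: "emeasure (P i j) (space (P i j)) \<noteq> \<infinity>"
    by (auto simp: top_unique)
  have "integrable (P i j) (Rdu lam N r p q c d g)" "integrable (P i j) (ell lam r p q c d k l)" for k l
    by (rule integrable_continuous_on_Su[OF sets finite];
        intro continuous_on_Rdu continuous_on_ell)+
  then show ?thesis
    unfolding Rdu_plus_ell_def by (simp add: integral_sum integrable_sum)
qed

lemma lin_sys_iff:
  "lin_sys lam N r p q c d P g v \<longleftrightarrow>
     (\<forall>i\<in>{1..N}. \<forall>j\<in>{1,2}. v i j = integral\<^sup>L (P i j) (Rdu_plus_ell lam N r p q c d g v))"
  unfolding lin_sys_def by (simp add: integral_Rdu_plus_ell)

lemma A_rel_Rdu_plus_ell: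
  assumes "lin_sys lam N r p q c d P g v"
  shows "A_rel N r p q c d P (Rdu_plus_ell lam N r p q c d g v)
           (\<lambda>y. lam * Rdu_plus_ell lam N r p q c d g v y - g y)"
  unfolding A_rel_iff_wentzell_bvp
proof
  fix i assume i: "i \<in> {1..N}"
  have "integral\<^sup>L (P i j) (Rdu_plus_ell lam N r p q c d g v) = v i j" if "j \<in> {1,2}" for j
    using assms i that by (auto simp: lin_sys_iff)
  with wentzell_bvp_Rdu_plus_ell[OF i]
  show "wentzell_bvp lam (r i) (p i) (q i) (c i) (d i) (\<lambda>x. g (i, x))
      (integral\<^sup>L (P i 1) (Rdu_plus_ell lam N r p q c d g v))
      (integral\<^sup>L (P i 2) (Rdu_plus_ell lam N r p q c d g v))
      (\<lambda>x. Rdu_plus_ell lam N r p q c d g v (i, x))"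
    by simp
qed

lemma A_rel_imp_eq_Rdu_plus_ell:
  assumes "A_rel N r p q c d P h (\<lambda>y. lam * h y - g y)"
  obtains v where "idx_vec N v" "lin_sys lam N r p q c d P g v"
    "\<forall>y\<in>Su N r. h y = Rdu_plus_ell lam N r p q c d g v y"
proof
  define v where "v k l = (if k \<in> {1..N} \<and> l \<in> {1,2} then integral\<^sup>L (P k l) h else 0)" for k l
  show "idx_vec N v"
    unfolding idx_vec_def v_def by auto
  show eq: "\<forall>y\<in>Su N r. h y = Rdu_plus_ell lam N r p q c d g v y"
  proof
    fix y assume "y \<in> Su N r"
    then obtain i x where y: "y = (i, x)" and i: "i \<in> {1..N}" and x: "x \<in> {0..r i}"
      unfolding Su_def by blast
    interpret wentzell_interval lam "r i" "p i" "q i" "c i" "d i"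
      using i by (rule wentzell_interval_edge)
    have "wentzell_bvp lam (r i) (p i) (q i) (c i) (d i) (\<lambda>x. g (i, x)) (v i 1) (v i 2) (\<lambda>x. h (i, x))"
      using assms i unfolding A_rel_iff_wentzell_bvp by (simp add: v_def)
    from wentzell_bvp_unique[OF this wentzell_bvp_Rdu_plus_ell[OF i, of v] x]
    show "h y = Rdu_plus_ell lam N r p q c d g v y"
      unfolding y .
  qed
  show "lin_sys lam N r p q c d P g v"
    unfolding lin_sys_iff
  proof (intro ballI)
    fix i j :: nat assume ij: "i \<in> {1..N}" "j \<in> {1,2}"
    then have "space (P i j) = Su N r"
      using measures space_eq_Su by blast
    with eq ij show "v i j = integral\<^sup>L (P i j) (Rdu_plus_ell lam N r p q c d g v)"
      unfolding v_def by (auto intro: Bochner_Integration.integral_cong)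
  qed
qed

end

theorem theorem6:
  fixes N :: nat and r p q c d :: "nat \<Rightarrow> real"
    and P :: "nat \<Rightarrow> nat \<Rightarrow> (nat \<times> real) measure"
    and lam :: real and g :: "nat \<times> real \<Rightarrow> real"
  assumes "N \<ge> 1"
    and "\<forall>i\<in>{1..N}. r i > 0 \<and> p i \<in> {0..1} \<and> q i \<in> {0..1} \<and> c i > 0 \<and> d i > 0"
    and "\<forall>i\<in>{1..N}. \<forall>j\<in>{1,2}. sets (P i j) = sets (restrict_space borel (Su N r)) \<and>
           emeasure (P i j) (space (P i j)) \<le> 1"
    and "lam > 0"
    and "continuous_on (Su N r) g"
    and "\<exists>!u. idx_vec N u \<and> lin_sys lam N r p q c d P g u"
  shows "\<exists>f. A_rel N r p q c d P f (\<lambda>y. lam * f y - g y) \<and>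
             (\<forall>h. A_rel N r p q c d P h (\<lambda>y. lam * h y - g y) \<longrightarrow> (\<forall>y\<in>Su N r. h y = f y)) \<and>
             (\<forall>y\<in>Su N r. f y = Rco lam N r p q c d P g y)"
proof -
  interpret wentzell_family N r p q c d P lam g
    using assms(2-5) by unfold_locales
  define u where "u = usol lam N r p q c d P g"
  have u: "idx_vec N u \<and> lin_sys lam N r p q c d P g u"
    unfolding u_def usol_def by (rule theI'[OF assms(6)])
  show ?thesis
  proof (intro exI conjI allI impI)
    show "A_rel N r p q c d P (Rdu_plus_ell lam N r p q c d g u)
            (\<lambda>y. lam * Rdu_plus_ell lam N r p q c d g u y - g y)"
      using u by (blast intro: A_rel_Rdu_plus_ell)
  next
    fix h assume "A_rel N r p q c d P h (\<lambda>y. lam * h y - g y)"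
    then obtain v where "idx_vec N v" "lin_sys lam N r p q c d P g v"
      and h: "\<forall>y\<in>Su N r. h y = Rdu_plus_ell lam N r p q c d g v y"
      by (rule A_rel_imp_eq_Rdu_plus_ell)
    with u assms(6) have "v = u" by blast
    with h show "\<forall>y\<in>Su N r. h y = Rdu_plus_ell lam N r p q c d g u y" by simp
  next
    show "\<forall>y\<in>Su N r. Rdu_plus_ell lam N r p q c d g u y = Rco lam N r p q c d P g y"
      by (simp add: Rdu_plus_ell_def Rco_def u_def)
  qed
qed

end
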